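(* Fix an integer $n\ge1$. Let $Q$ be the variety obtained by gluing $Q_0=\mathbb A^1\times\mathbb A^2$ and $Q_1=\mathbb A^1\times\mathbb A^2$ (coordinates $(t,(u,v))$ on each) along the open sets $\{t\ne0\}$ via $Q_0\supset\{t\neq 0\}\to\{t\ne0\}\subset Q_1$, $(t,(u,v))\mapsto(t^{-1},(t^{n+1}v^n+t^{n+2}u,\,tv))$. Define regular functions on $Q$ (given on $Q_0$; on $Q_1$) by: $f_0=tv$; $v$. $f_1=v$; $tv$. $g_i=t^{n+2-i}u+t^{n+1-i}v^n$; $t^iu$ ($i=0,\dots,n+1$). $h=u$; $t^{n+2}u-t^{n+1}v^n$. Let $\hat P\subset\mathbb A^{n+5}$ be the reduced affine variety defined by the ideal $I\subset\mathbb{C}[X_0,X_1,Y_0,\dots,Y_{n+1},Z]$ generated by $Y_iY_j-Y_kY_l$ ($i+j=k+l$), $X_0Y_{i+1}-X_1Y_i$ ($i=0,\dots,n$), $ZY_i+X_1^nY_{i+1}-Y_{i+1}Y_{n+1}$ ($i=0,\dots,n$), and $ZX_0+X_1^{n+1}-X_1Y_{n+1}$, and let $\psi=(f_0,f_1,g_0,\dots,g_{n+1},h)\colon Q\to\hat P$. Then $\psi$ contracts the curve $C=\{u=v=0\}\simeq\mathbb P^1$ to $0$ and restricts to an isomorphism $Q\setminus C\to\hat P\setminus\{0\}$; moreover $\mathcal O(Q)=\mathbb C[f_0,f_1,g_0,\dots,g_{n+1},h]$ and $\psi^*\colon\mathcal O(\hat P)\to\mathcal O(Q)$ is an isomorp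hism.
   Context: All varieties are over $\mathbb{C}$. (In the paper, $\hat P$ is the affine extension $\hat P_n$ of $\mathrm{SL}_2$.) *)

theory Defs
  imports Complex_Main
begin

text \<open>Points of affine m-space are represented as functions nat => complex; the
coordinates are the values at 0,...,m-1.  Polynomial functions in m variables are
the smallest set containing constants and the coordinate functions and closed
under sum and product (over the infinite field C these are exactly the
polynomials C[x_0,...,x_{m-1}]).\<close>

inductive_set polyfuns :: "nat \<Rightarrow> ((nat \<Rightarrow> complex) \<Rightarrow> complex) set" for m :: nat where
  const: "(\<lambda>x. c) \<in> polyfuns m"
| var: "i < m \<Longrightarrow> (\<lambda>x. x i) \<in> polyfuns m"
| add: "p \<in> polyfuns m \<Longrightarrow> q \<in> polyfuns m \<Longrightarrow> (\<lambda>x. p x + q x) \<in> polyfuns m"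
| mult: "p \<in> polyfuns m \<Longrightarrow> q \<in> polyfuns m \<Longrightarrow> (\<lambda>x. p x * q x) \<in> polyfuns m"

type_synonym pt3 = "complex \<times> complex \<times> complex"

text \<open>Chart index: False = Q_0, True = Q_1.  Transition map on t /= 0.\<close>
definition glue :: "nat \<Rightarrow> pt3 \<Rightarrow> pt3" where
  "glue n p = (case p of (t, u, v) \<Rightarrow>
     (inverse t, t ^ (n + 1) * v ^ n + t ^ (n + 2) * u, t * v))"

definition Qrel :: "nat \<Rightarrow> ((bool \<times> pt3) \<times> (bool \<times> pt3)) set" where
  "Qrel n = {(a, b). a = b
     \<or> (fst a = False \<and> fst b = True \<and> fst (snd a) \<noteq> 0 \<and> snd b = glue n (snd a))
     \<or> (fst a = True \<and> fst b = False \<and> fst (snd b) \<noteq> 0 \<and> snd a = glue n (snd b))}"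

definition Qpts :: "nat \<Rightarrow> (bool \<times> pt3) set set" where
  "Qpts n = UNIV // Qrel n"

definition chart :: "nat \<Rightarrow> bool \<Rightarrow> pt3 \<Rightarrow> (bool \<times> pt3) set" where
  "chart n i p = Qrel n `` {(i, p)}"

definition regQ :: "nat \<Rightarrow> ((bool \<times> pt3) set \<Rightarrow> complex) \<Rightarrow> bool" where
  "regQ n F = (\<forall>i. (\<lambda>x. F (chart n i (x 0, x 1, x 2))) \<in> polyfuns 3)"

definition Ccurve :: "nat \<Rightarrow> (bool \<times> pt3) set set" where
  "Ccurve n = {chart n i (t, 0, 0) | i t. True}"

text \<open>Coordinates of A^(n+5): X_0 = 0, X_1 = 1, Y_i = 2+i (i = 0..n+1), Z = n+4.\<close>
definition psi_rep :: "nat \<Rightarrow> bool \<Rightarrow> pt3 \<Rightarrow> (nat \<Rightarrow> complex)" where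
  "psi_rep n i p = (case p of (t, u, v) \<Rightarrow> (\<lambda>k.
     if \<not> i then
       (if k = 0 then t * v else if k = 1 then v
        else if k \<le> n + 3 then t ^ (n + 2 - (k - 2)) * u + t ^ (n + 1 - (k - 2)) * v ^ n
        else if k = n + 4 then u else 0)
     else
       (if k = 0 then v else if k = 1 then t * v
        else if k \<le> n + 3 then t ^ (k - 2) * u
        else if k = n + 4 then t ^ (n + 2) * u - t ^ (n + 1) * v ^ n else 0)))"

definition psi :: "nat \<Rightarrow> (bool \<times> pt3) set \<Rightarrow> (nat \<Rightarrow> complex)" where
  "psi n x = (case (SOME r. r \<in> x) of (i, p) \<Rightarrow> psi_rep n i p)"

definition Phat :: "nat \<Rightarrow> (nat \<Rightarrow> complex) set" where
  "Phat n = {x. (\<forall>k\<ge>n + 5. x k = 0)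
     \<and> (\<forall>i j k l. i \<le> n + 1 \<and> j \<le> n + 1 \<and> k \<le> n + 1 \<and> l \<le> n + 1 \<and> i + j = k + l
           \<longrightarrow> x (2 + i) * x (2 + j) = x (2 + k) * x (2 + l))
     \<and> (\<forall>i\<le>n. x 0 * x (2 + (i + 1)) = x 1 * x (2 + i))
     \<and> (\<forall>i\<le>n. x (n + 4) * x (2 + i) + x 1 ^ n * x (2 + (i + 1))
                 = x (2 + (i + 1)) * x (2 + (n + 1)))
     \<and> x (n + 4) * x 0 + x 1 ^ (n + 1) = x 1 * x (2 + (n + 1))}"

text \<open>A map G from a subset Y of A^(n+5) to Q is a morphism: locally on a basic
open set D(q) of Y it lands in one chart with coordinates given by regular
functions (common-denominator fractions).\<close>
definition morph_into_Q :: "nat \<Rightarrow> (nat \<Rightarrow> complex) set \<Rightarrow>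
    ((nat \<Rightarrow> complex) \<Rightarrow> (bool \<times> pt3) set) \<Rightarrow> bool" where
  "morph_into_Q n Y G = (\<forall>y\<in>Y. \<exists>i q a b c.
     q \<in> polyfuns (n + 5) \<and> a \<in> polyfuns (n + 5) \<and> b \<in> polyfuns (n + 5)
     \<and> c \<in> polyfuns (n + 5) \<and> q y \<noteq> 0
     \<and> (\<forall>y'\<in>Y. q y' \<noteq> 0 \<longrightarrow> G y' = chart n i (a y' / q y', b y' / q y', c y' / q y')))"

end

theory Submission
  imports Defs "HOL-Computational_Algebra.Polynomial"
begin

text \<open>
  P-hat minus the origin is covered
  by the four basic open sets X_1, X_0, Z, Y_0 \<noteq> 0; on each of them the defining
  equations force the Y_i into a geometric sequence, which yields an explicit
  rational section of psi.  Gluing the sections gives the inverse psi_inv of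
  psi : Q - C \<rightarrow> P-hat - {0}, and it is a morphism.

  A regular function F on Q restricts to polynomials
  p(t,u,v) on Q_0 and q(s,a,b) on Q_1 with p(t,u,v) = q(1/t, t^(n+1) w, t v),
  where w = v^n + t u.  Substituting u = (w - v^n)/t makes this an identity of
  Laurent polynomials in t, and comparing the terms of positive degree shows that
  p is a polynomial in f_0 = t v, f_1 = v, g_k = t^(n+1-k) w and h = u.  The
  resulting identity F = P o psi then extends from Q_0 to Q_1 by continuity.

  (3) Since psi maps Q onto P-hat, pulling back along psi is injective.
\<close>

lemma psi_rep_Q0:
  "psi_rep n False (t,u,v) 0 = t * v"
  "psi_rep n False (t,u,v) (Suc 0) = v"
  "i \<le> n + 1 \<Longrightarrow> psi_rep n False (t,u,v) (2 + i) = t ^ (n + 1 - i) * (t * u + v ^ n)"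
  "psi_rep n False (t,u,v) (n + 4) = u"
  "k \<ge> n + 5 \<Longrightarrow> psi_rep n False (t,u,v) k = 0"
proof -
  assume i: "i \<le> n + 1"
  moreover have "n + 2 - i = Suc (n + 1 - i)" using i by linarith
  ultimately show "psi_rep n False (t,u,v) (2 + i) = t ^ (n + 1 - i) * (t * u + v ^ n)"
    by (simp add: psi_rep_def algebra_simps)
qed (simp_all add: psi_rep_def)

lemma psi_rep_Q1:
  "psi_rep n True (s,a,b) 0 = b"
  "psi_rep n True (s,a,b) (Suc 0) = s * b"
  "i \<le> n + 1 \<Longrightarrow> psi_rep n True (s,a,b) (2 + i) = s ^ i * a"
  "psi_rep n True (s,a,b) (n + 4) = s ^ (n + 2) * a - s ^ (n + 1) * b ^ n"
  "k \<ge> n + 5 \<Longrightarrow> psi_rep n True (s,a,b) k = 0"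
  by (simp_all add: psi_rep_def)

lemma point_eqI:
  fixes f g :: "nat \<Rightarrow> complex"
  assumes "f 0 = g 0" "f (Suc 0) = g (Suc 0)" "\<And>i. i \<le> n + 1 \<Longrightarrow> f (2 + i) = g (2 + i)"
    and "f (n + 4) = g (n + 4)" "\<And>k. k \<ge> n + 5 \<Longrightarrow> f k = g k"
  shows "f = g"
proof
  fix k
  consider "k = 0" | "k = 1" | "2 \<le> k \<and> k \<le> n + 3" | "k = n + 4" | "k \<ge> n + 5" by linarith
  then show "f k = g k"
  proof cases
    case 3
    then have "k = 2 + (k - 2)" by linarith
    then show ?thesis using 3 assms(3)[of "k - 2"] by simp
  qed (use assms in auto)
qed

lemma psi_rep_glue:
  assumes t: "t \<noteq> 0"
  shows "psi_rep n True (glue n (t,u,v)) = psi_rep n False (t,u,v)"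
proof (rule point_eqI[where n = n])
  have g: "glue n (t,u,v) = (inverse t, t ^ (n + 1) * v ^ n + t ^ (n + 2) * u, t * v)"
    by (simp add: glue_def)
  fix i assume i: "i \<le> n + 1"
  have e1: "t ^ (n + 1) = t ^ (n + 1 - i) * t ^ i" using i by (simp flip: power_add)
  have e2: "t ^ (n + 2) = t ^ (n + 1 - i) * t ^ i * t" using i by (simp flip: power_add power_Suc2)
  show "psi_rep n True (glue n (t,u,v)) (2 + i) = psi_rep n False (t,u,v) (2 + i)"
    unfolding g psi_rep_Q0(3)[OF i] psi_rep_Q1(3)[OF i] e1 e2 using t by (simp add: field_simps)
qed (use t in \<open>simp_all add: glue_def psi_rep_Q0 psi_rep_Q1 field_simps power_mult_distrib\<close>)

lemma glue_inj:
  assumes "t \<noteq> 0" and "glue n (t,u,v) = glue n (t',u',v')"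
  shows "(t,u,v) = (t',u',v')"
proof -
  have t: "t = t'" and v: "t * v = t' * v'"
    and w: "t^(n+1)*v^n + t^(n+2)*u = t'^(n+1)*v'^n + t'^(n+2)*u'"
    using assms(2) unfolding glue_def by auto
  have "v = v'" using v assms(1) unfolding t by simp
  with w have "t^(n+2) * u = t^(n+2) * u'" unfolding t by simp
  then have "u = u'" using assms(1) by simp
  then show ?thesis using t \<open>v = v'\<close> by simp
qed

lemma equiv_Qrel: "equiv UNIV (Qrel n)"
proof (rule equivI)
  show "refl (Qrel n)" by (auto simp: refl_on_def Qrel_def)
  show "sym (Qrel n)" by (auto simp: sym_def Qrel_def)
  show "trans (Qrel n)"
  proof (rule transI)
    fix x y z assume xy: "(x,y) \<in> Qrel n" and yz: "(y,z) \<in> Qrel n"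
    text \<open>Two non-trivial steps go from one chart to the other and back; since the
      gluing map is injective, they return to the starting point.\<close>
    have "x = z" if "x \<noteq> y" "y \<noteq> z"
    proof (cases "fst x")
      case True
      then show ?thesis using xy yz that unfolding Qrel_def by (auto simp: prod_eq_iff)
    next
      case False
      then have "fst z = False" "fst (snd x) \<noteq> 0" "glue n (snd x) = glue n (snd z)"
        using xy yz that unfolding Qrel_def by auto
      moreover from this have "snd x = snd z"
        using glue_inj[of "fst (snd x)" n "fst (snd (snd x))" "snd (snd (snd x))"]
        by (cases "snd z") auto
      ultimately show ?thesis using False by (simp add: prod_eq_iff)
    qed
    then show "(x,z) \<in> Qrel n" using xy yz unfolding Qrel_def by auto
  qed
qed simp

lemma chart_eqI: "((i,p),(j,q)) \<in> Qrel n \<Longrightarrow> chart n i p = chart n j q"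
  unfolding chart_def using equiv_Qrel equiv_class_eq by fast

lemma chart_in_Qpts: "chart n i p \<in> Qpts n"
  unfolding chart_def Qpts_def by (rule quotientI) simp

lemma Qpts_obtain_chart:
  assumes "x \<in> Qpts n"
  obtains i t u v where "x = chart n i (t,u,v)"
  using assms unfolding chart_def Qpts_def by (auto elim!: quotientE)

lemma chart_Q1_eq_Q0:
  assumes s: "s \<noteq> 0"
  shows "chart n True (s,a,b) = chart n False (1/s, s^(n+2)*a - s^(n+1)*b^n, s*b)"
proof -
  have "glue n (1/s, s^(n+2)*a - s^(n+1)*b^n, s*b) = (s,a,b)"
    using s by (simp add: glue_def field_simps power_mult_distrib)
  then show ?thesis using s by (intro chart_eqI) (auto simp: Qrel_def)
qed

lemma psi_rep_respects_Qrel: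
  assumes "(a, b) \<in> Qrel n"
  shows "psi_rep n (fst a) (snd a) = psi_rep n (fst b) (snd b)"
proof -
  have glued: "psi_rep n True (glue n p) = psi_rep n False p" if "fst p \<noteq> 0" for p
    using psi_rep_glue that by (cases p) auto
  show ?thesis using assms glued[of "snd a"] glued[of "snd b"] unfolding Qrel_def by auto
qed

lemma psi_chart: "psi n (chart n i p) = psi_rep n i p"
proof -
  define r where "r = (SOME r. r \<in> chart n i p)"
  have "(i,p) \<in> chart n i p" unfolding chart_def Qrel_def by simp
  then have "r \<in> chart n i p" unfolding r_def by (rule someI)
  then have "((i,p), r) \<in> Qrel n" unfolding chart_def by simp
  then have "psi_rep n i p = psi_rep n (fst r) (snd r)" using psi_rep_respects_Qrel by fastforce
  then show ?thesis unfolding psi_def r_def[symmetric] by (cases r) simp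
qed

lemma Phat_eqs:
  assumes "y \<in> Phat n"
  shows "\<And>k. k \<ge> n + 5 \<Longrightarrow> y k = 0"
    and "\<And>i j k l. i \<le> n + 1 \<Longrightarrow> j \<le> n + 1 \<Longrightarrow> k \<le> n + 1 \<Longrightarrow> l \<le> n + 1 \<Longrightarrow> i + j = k + l
           \<Longrightarrow> y (2 + i) * y (2 + j) = y (2 + k) * y (2 + l)"
    and "\<And>i. i \<le> n \<Longrightarrow> y 0 * y (2 + (i + 1)) = y 1 * y (2 + i)"
    and "\<And>i. i \<le> n \<Longrightarrow> y (n + 4) * y (2 + i) + y 1 ^ n * y (2 + (i + 1))
                 = y (2 + (i + 1)) * y (2 + (n + 1))"
    and "y (n + 4) * y 0 + y 1 ^ (n + 1) = y 1 * y (2 + (n + 1))"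
  using assms unfolding Phat_def by blast+

text \<open>On each chart the equations become identities between monomials in the chart
  coordinates.\<close>

lemma psi_rep_Q0_in_Phat: "psi_rep n False (t,u,v) \<in> Phat n"
proof -
  define x where "x = psi_rep n False (t,u,v)"
  define w where "w = t * u + v ^ n"
  have Y: "x (2 + i) = t ^ (n + 1 - i) * w" if "i \<le> n + 1" for i
    unfolding x_def w_def using psi_rep_Q0(3)[OF that] .
  have X0: "x 0 = t * v" and X1: "x 1 = v" and Z: "x (n + 4) = u"
    and pad: "\<And>k. k \<ge> n + 5 \<Longrightarrow> x k = 0"
    unfolding x_def using psi_rep_Q0 by auto
  have "x \<in> Phat n"
    unfolding Phat_def mem_Collect_eq
  proof (intro conjI allI impI)
    show "x k = 0" if "n + 5 \<le> k" for k using pad that .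
    fix i j k l assume h: "i \<le> n + 1 \<and> j \<le> n + 1 \<and> k \<le> n + 1 \<and> l \<le> n + 1 \<and> i + j = k + l"
    then have "(n + 1 - i) + (n + 1 - j) = (n + 1 - k) + (n + 1 - l)" by linarith
    then have ee: "t ^ (n + 1 - i) * t ^ (n + 1 - j) = t ^ (n + 1 - k) * t ^ (n + 1 - l)"
      by (simp only: flip: power_add)
    have "x (2 + i) * x (2 + j) = (t ^ (n + 1 - i) * t ^ (n + 1 - j)) * (w * w)"
      using h by (simp only: Y mult_ac)
    also have "\<dots> = x (2 + k) * x (2 + l)"
      using h by (simp only: ee Y mult_ac)
    finally show "x (2 + i) * x (2 + j) = x (2 + k) * x (2 + l)" .
  next
    fix i assume i: "i \<le> n"
    then have "n + 1 - i = Suc (n - i)" by linarith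
    then have Yi: "x (2 + i) = t * (t ^ (n - i) * w)" using Y[of i] i by simp
    have Yi1: "x (2 + (i + 1)) = t ^ (n - i) * w" using Y[of "i + 1"] i by simp
    have Yn: "x (2 + (n + 1)) = w" using Y[of "n + 1"] by simp
    show "x 0 * x (2 + (i + 1)) = x 1 * x (2 + i)"
      unfolding X0 X1 Yi Yi1 by (simp add: algebra_simps)
    show "x (n + 4) * x (2 + i) + x 1 ^ n * x (2 + (i + 1)) = x (2 + (i + 1)) * x (2 + (n + 1))"
      unfolding Z X1 Yi Yi1 Yn by (simp add: w_def algebra_simps)
  next
    show "x (n + 4) * x 0 + x 1 ^ (n + 1) = x 1 * x (2 + (n + 1))"
      unfolding Z X0 X1 using Y[of "n + 1"] by (simp add: w_def algebra_simps)
  qed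
  then show ?thesis unfolding x_def .
qed

lemma psi_rep_Q1_in_Phat: "psi_rep n True (s,a,b) \<in> Phat n"
proof -
  define x where "x = psi_rep n True (s,a,b)"
  have Y: "x (2 + i) = s ^ i * a" if "i \<le> n + 1" for i
    unfolding x_def using psi_rep_Q1(3)[OF that] .
  have X0: "x 0 = b" and X1: "x 1 = s * b" and Z: "x (n + 4) = s^(n+2) * a - s^(n+1) * b^n"
    and pad: "\<And>k. k \<ge> n + 5 \<Longrightarrow> x k = 0"
    unfolding x_def using psi_rep_Q1 by auto
  have "x \<in> Phat n"
    unfolding Phat_def mem_Collect_eq
  proof (intro conjI allI impI)
    show "x k = 0" if "n + 5 \<le> k" for k using pad that .
    fix i j k l assume h: "i \<le> n + 1 \<and> j \<le> n + 1 \<and> k \<le> n + 1 \<and> l \<le> n + 1 \<and> i + j = k + l"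
    then have ee: "s ^ i * s ^ j = s ^ k * s ^ l" by (simp only: flip: power_add)
    have "x (2 + i) * x (2 + j) = (s ^ i * s ^ j) * (a * a)"
      using h by (simp only: Y mult_ac)
    also have "\<dots> = x (2 + k) * x (2 + l)"
      using h by (simp only: ee Y mult_ac)
    finally show "x (2 + i) * x (2 + j) = x (2 + k) * x (2 + l)" .
  next
    fix i assume i: "i \<le> n"
    have Yi: "x (2 + i) = s ^ i * a" and Yi1: "x (2 + (i + 1)) = s ^ (i + 1) * a"
      and Yn: "x (2 + (n + 1)) = s ^ (n + 1) * a" using Y i by simp_all
    show "x 0 * x (2 + (i + 1)) = x 1 * x (2 + i)"
      unfolding X0 X1 Yi Yi1 by (simp add: algebra_simps)
    show "x (n + 4) * x (2 + i) + x 1 ^ n * x (2 + (i + 1)) = x (2 + (i + 1)) * x (2 + (n + 1))"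
      unfolding Z X1 Yi Yi1 Yn by (simp add: algebra_simps power_add power_mult_distrib)
  next
    show "x (n + 4) * x 0 + x 1 ^ (n + 1) = x 1 * x (2 + (n + 1))"
      unfolding Z X0 X1 using Y[of "n + 1"] by (simp add: algebra_simps power_mult_distrib)
  qed
  then show ?thesis unfolding x_def .
qed

lemma psi_in_Phat:
  assumes "x \<in> Qpts n"
  shows "psi n x \<in> Phat n"
proof -
  obtain i t u v where "x = chart n i (t,u,v)" using Qpts_obtain_chart[OF assms] .
  then show ?thesis using psi_rep_Q0_in_Phat psi_rep_Q1_in_Phat
    by (cases i) (simp_all add: psi_chart)
qed

text \<open>psi_rep vanishes exactly on the curve u = v = 0 of either chart.  The
  coordinate Z = t^(n+2) u - t^(n+1) v^n on Q_1 uses n \<ge> 1.\<close>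

lemma psi_rep_on_C:
  assumes n: "n \<ge> 1"
  shows "psi_rep n i (t,0,0) = (\<lambda>_. 0)"
  by (rule point_eqI[where n = n]) (use n in \<open>simp_all add: psi_rep_def power_0_left\<close>)

lemma psi_rep_eq_0_imp_C:
  assumes "psi_rep n i (t,u,v) = (\<lambda>_. 0)"
  shows "u = 0 \<and> v = 0"
proof (cases i)
  case True
  have "psi_rep n i (t,u,v) 0 = 0" "psi_rep n i (t,u,v) (2 + 0) = 0" using assms by simp_all
  then show ?thesis using True psi_rep_Q1(1)[of n t u v] psi_rep_Q1(3)[of 0 n t u v] by simp
next
  case False
  have "psi_rep n i (t,u,v) 1 = 0" "psi_rep n i (t,u,v) (n + 4) = 0" using assms by simp_all
  then show ?thesis using False psi_rep_Q0 by simp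
qed

lemma psi_on_Ccurve: "n \<ge> 1 \<Longrightarrow> x \<in> Ccurve n \<Longrightarrow> psi n x = (\<lambda>_. 0)"
  unfolding Ccurve_def using psi_chart psi_rep_on_C by auto

lemma psi_nonzero_off_Ccurve:
  assumes "x \<in> Qpts n" "x \<notin> Ccurve n"
  shows "psi n x \<noteq> (\<lambda>_. 0)"
proof
  assume z: "psi n x = (\<lambda>_. 0)"
  obtain i t u v where x: "x = chart n i (t,u,v)" using Qpts_obtain_chart[OF assms(1)] .
  have "u = 0 \<and> v = 0" using z psi_rep_eq_0_imp_C unfolding x psi_chart by blast
  then have "x \<in> Ccurve n" unfolding x Ccurve_def by auto
  then show False using assms by simp
qed

section \<open>Local sections of psi over P-hat minus the origin\<close>

text \<open>The equations X_0 Y_(i+1) = X_1 Y_i (and the quadric ones) make Y a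
  geometric sequence as soon as one ratio is known.\<close>

lemma geometric_down:
  fixes Y :: "nat \<Rightarrow> 'a::monoid_mult"
  assumes "\<And>i. i \<le> n \<Longrightarrow> Y i = t * Y (i + 1)" and "i \<le> n + 1"
  shows "Y i = t ^ (n + 1 - i) * Y (n + 1)"
  using assms(2)
proof (induction i rule: inc_induct)
  case (step m)
  then have "n + 1 - m = Suc (n + 1 - Suc m)" by linarith
  then show ?case using assms(1)[of m] step by (simp add: mult.assoc)
qed simp

lemma geometric_up:
  fixes Y :: "nat \<Rightarrow> 'a::monoid_mult"
  assumes "\<And>i. i \<le> n \<Longrightarrow> Y (i + 1) = s * Y i" and "i \<le> n + 1"
  shows "Y i = s ^ i * Y 0"
  using assms(2)
proof (induction i)
  case (Suc m) then show ?case using assms(1)[of m] by (simp add: mult.assoc)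
qed simp

lemma Phat_nonzero_cover:
  assumes y: "y \<in> Phat n" and n: "n \<ge> 1" and nz: "y \<noteq> (\<lambda>_. 0)"
  shows "y 1 \<noteq> 0 \<or> y 0 \<noteq> 0 \<or> y (n + 4) \<noteq> 0 \<or> y 2 \<noteq> 0"
proof (rule ccontr)
  assume "\<not> ?thesis"
  then have z: "y 1 = 0" "y 0 = 0" "y (n + 4) = 0" "y 2 = 0" by auto
  note E = Phat_eqs[OF y]
  have n0: "y 1 ^ n = 0" using z n by simp
  have "y (2 + (n + 1)) * y (2 + (n + 1)) = 0" using E(4)[of n] z n0 n by (simp add: power_0_left)
  then have Yn: "y (2 + (n + 1)) = 0" by simp
  text \<open>Y_i^2 = Y_0 Y_(2i) or Y_(2i-n-1) Y_(n+1), both of which vanish.\<close>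
  have Yi: "y (2 + i) = 0" if i: "i \<le> n + 1" for i
  proof (cases "2 * i \<le> n + 1")
    case True
    have "y (2 + i) * y (2 + i) = y (2 + 0) * y (2 + 2 * i)" using E(2)[of i i 0 "2 * i"] i True
      by simp
    then show ?thesis using z by simp
  next
    case False
    have "y (2 + i) * y (2 + i) = y (2 + (2 * i - (n + 1))) * y (2 + (n + 1))"
      using E(2)[of i i "2 * i - (n + 1)" "n + 1"] i False by simp
    then show ?thesis using Yn by simp
  qed
  have "y = (\<lambda>_. 0)" by (rule point_eqI[where n = n]) (use z Yi E(1) in auto)
  then show False using nz by simp
qed

lemma psi_rep_section_X1:
  assumes y: "y \<in> Phat n" and h: "y 1 \<noteq> 0"
  shows "psi_rep n False (y 0 / y 1, y (n + 4), y 1) = y"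
proof (rule point_eqI[where n = n])
  define t where "t = y 0 / y 1"
  note E = Phat_eqs[OF y]
  have w: "t * y (n + 4) + y 1 ^ n = y (2 + (n + 1))"
    using E(5) h unfolding t_def by (simp add: field_simps)
  have step: "y (2 + i) = t * y (2 + (i + 1))" if "i \<le> n" for i
    using E(3)[OF that] h unfolding t_def by (simp add: field_simps)
  show "psi_rep n False (y 0 / y 1, y (n + 4), y 1) (2 + i) = y (2 + i)" if i: "i \<le> n + 1" for i
    using geometric_down[of n "\<lambda>i. y (2 + i)" t i, OF step i]
    unfolding psi_rep_Q0(3)[OF i] t_def[symmetric] w by simp
qed (use h Phat_eqs(1)[OF y] in \<open>simp_all add: psi_rep_Q0\<close>)

lemma psi_rep_section_X0:
  assumes y: "y \<in> Phat n" and h: "y 0 \<noteq> 0"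
  shows "psi_rep n True (y 1 / y 0, y 2, y 0) = y"
proof (rule point_eqI[where n = n])
  define s where "s = y 1 / y 0"
  note E = Phat_eqs[OF y]
  have "y (2 + (i + 1)) = s * y (2 + i)" if "i \<le> n" for i
    using E(3)[OF that] h unfolding s_def by (simp add: field_simps)
  then have Y: "y (2 + i) = s ^ i * y 2" if "i \<le> n + 1" for i
    using geometric_up[of n "\<lambda>i. y (2 + i)" s i] that by simp
  show "psi_rep n True (y 1 / y 0, y 2, y 0) (2 + i) = y (2 + i)" if i: "i \<le> n + 1" for i
    unfolding psi_rep_Q1(3)[OF i] s_def[symmetric] using Y[OF i] by simp
  have X1: "y 1 = s * y 0" using h unfolding s_def by simp
  have "y (n + 4) * y 0 = y 1 * y (2 + (n + 1)) - y 1 ^ (n + 1)"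
    using E(5) by (simp add: algebra_simps)
  also have "\<dots> = s * y 0 * (s ^ (n + 1) * y 2) - (s * y 0) ^ (n + 1)"
    using Y[of "n + 1"] X1 by simp
  finally have "y (n + 4) * y 0 = (s ^ (n + 2) * y 2 - s ^ (n + 1) * y 0 ^ n) * y 0"
    by (simp add: algebra_simps power_mult_distrib)
  then show "psi_rep n True (y 1 / y 0, y 2, y 0) (n + 4) = y (n + 4)"
    using h unfolding psi_rep_Q1 s_def[symmetric] by simp
qed (use h Phat_eqs(1)[OF y] in \<open>simp_all add: psi_rep_Q1\<close>)

lemma psi_rep_section_Z:
  assumes y: "y \<in> Phat n" and h: "y (n + 4) \<noteq> 0"
  shows "psi_rep n False ((y (n + 3) - y 1 ^ n) / y (n + 4), y (n + 4), y 1) = y"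
proof (rule point_eqI[where n = n])
  define t where "t = (y (n + 3) - y 1 ^ n) / y (n + 4)"
  note E = Phat_eqs[OF y]
  have n3: "2 + (n + 1) = n + 3" by simp
  have w: "t * y (n + 4) + y 1 ^ n = y (2 + (n + 1))"
    using h unfolding t_def n3 by (simp add: field_simps)
  have step: "y (2 + i) = t * y (2 + (i + 1))" if "i \<le> n" for i
    using E(4)[OF that] h unfolding t_def n3 by (simp add: field_simps)
  show "psi_rep n False ((y (n + 3) - y 1 ^ n) / y (n + 4), y (n + 4), y 1) (2 + i) = y (2 + i)"
    if i: "i \<le> n + 1" for i
    using geometric_down[of n "\<lambda>i. y (2 + i)" t i, OF step i]
    unfolding psi_rep_Q0(3)[OF i] t_def[symmetric] w by simp
  have "y (n + 4) * y 0 = y 1 * (y (n + 3) - y 1 ^ n)"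
    using E(5) unfolding n3 by (simp add: algebra_simps)
  then show "psi_rep n False ((y (n + 3) - y 1 ^ n) / y (n + 4), y (n + 4), y 1) 0 = y 0"
    using h by (simp add: psi_rep_Q0 field_simps)
qed (use Phat_eqs(1)[OF y] in \<open>simp_all add: psi_rep_Q0\<close>)

lemma psi_rep_section_Y0:
  assumes y: "y \<in> Phat n" and h: "y 2 \<noteq> 0"
  shows "psi_rep n True (y 3 / y 2, y 2, y 0) = y"
proof (rule point_eqI[where n = n])
  define s where "s = y 3 / y 2"
  note E = Phat_eqs[OF y]
  have "y (2 + (i + 1)) = s * y (2 + i)" if "i \<le> n" for i
  proof -
    have "y (2 + (i + 1)) * y (2 + 0) = y (2 + 1) * y (2 + i)" using E(2)[of "i + 1" 0 1 i] that
      by simp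
    then show ?thesis using h unfolding s_def by (simp add: field_simps eval_nat_numeral)
  qed
  then have Y: "y (2 + i) = s ^ i * y 2" if "i \<le> n + 1" for i
    using geometric_up[of n "\<lambda>i. y (2 + i)" s i] that by simp
  show "psi_rep n True (y 3 / y 2, y 2, y 0) (2 + i) = y (2 + i)" if i: "i \<le> n + 1" for i
    unfolding psi_rep_Q1(3)[OF i] s_def[symmetric] using Y[OF i] by simp
  have X1: "y 1 = s * y 0" using E(3)[of 0] h unfolding s_def
    by (simp add: field_simps eval_nat_numeral)
  then show "psi_rep n True (y 3 / y 2, y 2, y 0) (Suc 0) = y (Suc 0)"
    unfolding s_def by (simp add: psi_rep_Q1)
  have Y1: "y 3 = s * y 2" using h unfolding s_def by simp
  have "y (n + 4) * y (2 + 0) = y (2 + 1) * y (2 + (n + 1)) - y 1 ^ n * y (2 + 1)"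
    using E(4)[of 0] by (simp add: algebra_simps)
  also have "\<dots> = s * y 2 * (s ^ (n + 1) * y 2) - (s * y 0) ^ n * (s * y 2)"
    using Y[of "n + 1"] X1 Y1 by (simp add: numeral_eq_Suc)
  finally have "y (n + 4) * y 2 = (s ^ (n + 2) * y 2 - s ^ (n + 1) * y 0 ^ n) * y 2"
    by (simp add: algebra_simps power_mult_distrib eval_nat_numeral)
  then show "psi_rep n True (y 3 / y 2, y 2, y 0) (n + 4) = y (n + 4)"
    using h unfolding psi_rep_Q1 s_def[symmetric] by simp
qed (use Phat_eqs(1)[OF y] in \<open>simp_all add: psi_rep_Q1\<close>)

definition psi_inv :: "nat \<Rightarrow> (nat \<Rightarrow> complex) \<Rightarrow> (bool \<times> pt3) set" where
  "psi_inv n y = (if y 1 \<noteq> 0 then chart n False (y 0 / y 1, y (n + 4), y 1)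
     else if y 0 \<noteq> 0 then chart n True (y 1 / y 0, y 2, y 0)
     else if y (n + 4) \<noteq> 0
       then chart n False ((y (n + 3) - y 1 ^ n) / y (n + 4), y (n + 4), y 1)
     else chart n True (y 3 / y 2, y 2, y 0))"

lemma psi_inv_in_Qpts: "psi_inv n y \<in> Qpts n"
  unfolding psi_inv_def by (simp add: chart_in_Qpts)

lemma psi_psi_inv:
  assumes n: "n \<ge> 1" and y: "y \<in> Phat n" and nz: "y \<noteq> (\<lambda>_. 0)"
  shows "psi n (psi_inv n y) = y"
  using Phat_nonzero_cover[OF y n nz] psi_rep_section_X1[OF y] psi_rep_section_X0[OF y]
    psi_rep_section_Z[OF y] psi_rep_section_Y0[OF y]
  unfolding psi_inv_def by (auto simp: psi_chart)

text \<open>psi_inv recovers a point of Q_0 with (u,v) \<noteq> (0,0): it lies in the piece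
  X_1 = v \<noteq> 0 or in the piece Z = u \<noteq> 0.\<close>

lemma psi_inv_psi_rep_Q0:
  assumes n: "n \<ge> 1" and nz: "u \<noteq> 0 \<or> v \<noteq> 0"
  shows "psi_inv n (psi_rep n False (t,u,v)) = chart n False (t,u,v)"
proof -
  define y where "y = psi_rep n False (t,u,v)"
  have y: "y 0 = t * v" "y 1 = v" "y (n + 4) = u" "y (n + 3) = t * u + v ^ n"
    using psi_rep_Q0(1,2,4) psi_rep_Q0(3)[of "n + 1" n t u v] unfolding y_def
    by (simp_all add: numeral_eq_Suc)
  show ?thesis using nz n unfolding y_def[symmetric] psi_inv_def y by (simp add: power_0_left)
qed

text \<open>A point of Q_1 either lies in Q_0 as well, or on the axis s = 0, where it
  lies in the piece X_0 = b \<noteq> 0 or in the piece Y_0 = a \<noteq> 0.\<close>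

lemma psi_inv_psi_rep_Q1:
  assumes n: "n \<ge> 1" and nz: "a \<noteq> 0 \<or> b \<noteq> 0"
  shows "psi_inv n (psi_rep n True (s,a,b)) = chart n True (s,a,b)"
proof (cases "s = 0")
  case True
  define y where "y = psi_rep n True (0,a,b)"
  have y: "y 0 = b" "y 1 = 0" "y 2 = a" "y 3 = 0" "y (n + 4) = 0"
    using psi_rep_Q1(1,2,4) psi_rep_Q1(3)[of 0 n 0 a b] psi_rep_Q1(3)[of 1 n 0 a b] n
    unfolding y_def by (simp_all add: numeral_eq_Suc)
  show ?thesis using nz unfolding True y_def[symmetric] psi_inv_def y by simp
next
  case False
  define p where "p = (1/s, s^(n+2)*a - s^(n+1)*b^n, s*b)"
  have p: "chart n True (s,a,b) = chart n False p" unfolding p_def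
    by (rule chart_Q1_eq_Q0[OF False])
  then have "psi_rep n True (s,a,b) = psi_rep n False p" by (metis psi_chart)
  moreover have "fst (snd p) \<noteq> 0 \<or> snd (snd p) \<noteq> 0"
    using nz False n unfolding p_def by (auto simp: power_0_left)
  ultimately show ?thesis using psi_inv_psi_rep_Q0[OF n] p by (cases p) auto
qed

lemma psi_inv_psi:
  assumes n: "n \<ge> 1" and x: "x \<in> Qpts n - Ccurve n"
  shows "psi_inv n (psi n x) = x"
proof -
  obtain i t u v where xe: "x = chart n i (t,u,v)" using x Qpts_obtain_chart by blast
  then have "u \<noteq> 0 \<or> v \<noteq> 0" using x unfolding Ccurve_def by auto
  then show ?thesis
    unfolding xe psi_chart using psi_inv_psi_rep_Q0[OF n] psi_inv_psi_rep_Q1[OF n] by (cases i) auto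
qed

lemma psi_inv_maps_to:
  assumes n: "n \<ge> 1" and y: "y \<in> Phat n - {\<lambda>_. 0}"
  shows "psi_inv n y \<in> Qpts n - Ccurve n"
  using psi_psi_inv[OF n] psi_on_Ccurve[OF n] psi_inv_in_Qpts y by force

lemma bij_psi:
  assumes n: "n \<ge> 1"
  shows "bij_betw (psi n) (Qpts n - Ccurve n) (Phat n - {\<lambda>_. 0})"
proof (rule bij_betw_byWitness[where f' = "psi_inv n"])
  show "psi n ` (Qpts n - Ccurve n) \<subseteq> Phat n - {\<lambda>_. 0}"
    using psi_in_Phat psi_nonzero_off_Ccurve by auto
qed (use psi_inv_psi[OF n] psi_psi_inv[OF n] psi_inv_maps_to[OF n] in auto)

lemma polyfuns_diff:
  "p \<in> polyfuns m \<Longrightarrow> q \<in> polyfuns m \<Longrightarrow> (\<lambda>x. p x - q x) \<in> polyfuns m"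
  using polyfuns.add[OF _ polyfuns.mult[OF polyfuns.const[of "-1"]], of p m q] by simp

lemma polyfuns_power: "p \<in> polyfuns m \<Longrightarrow> (\<lambda>x. p x ^ j) \<in> polyfuns m"
  by (induction j) (simp_all add: polyfuns.const polyfuns.mult)

lemma polyfuns_comp:
  assumes "P \<in> polyfuns m" and "\<And>k. k < m \<Longrightarrow> (\<lambda>x. g x k) \<in> polyfuns m'"
  shows "(\<lambda>x. P (g x)) \<in> polyfuns m'"
  using assms(1) by induction (use assms(2) in \<open>auto intro: polyfuns.intros\<close>)

lemma psi_rep_polyfuns: "(\<lambda>x. psi_rep n i (x 0, x 1, x 2) k) \<in> polyfuns 3"
proof -
  have if_const: "(\<lambda>x. if c then f x else g x) \<in> polyfuns 3"
    if "f \<in> polyfuns 3" "g \<in> polyfuns 3" for c and f g :: "(nat \<Rightarrow> complex) \<Rightarrow> complex"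
    using that by (cases c) simp_all
  show ?thesis unfolding psi_rep_def prod.case
    by (intro if_const polyfuns.intros polyfuns_power polyfuns_diff) simp_all
qed

lemma polyfuns_continuous:
  assumes "p \<in> polyfuns m"
  shows "continuous_on UNIV (\<lambda>z. p (x(0 := z)))"
  using assms
proof (induction p rule: polyfuns.induct)
  case (var i) then show ?case by (cases "i = 0") (simp_all add: continuous_on_id)
qed (auto intro!: continuous_intros)

lemma polyfuns_eq_off_hyperplane:
  assumes f: "f \<in> polyfuns m" and g: "g \<in> polyfuns m"
    and eq: "\<And>z. z \<noteq> 0 \<Longrightarrow> f (x(0 := z)) = g (x(0 := z))"
  shows "f (x(0 := 0)) = g (x(0 := 0))"
proof -
  define h where "h z = f (x(0 := z)) - g (x(0 := z))" for z
  have "continuous_on UNIV h"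
    unfolding h_def
      by (intro continuous_on_diff polyfuns_continuous[OF f] polyfuns_continuous[OF g])
  then have "(h \<longlongrightarrow> h 0) (at 0)" by (simp add: continuous_on_def)
  moreover have "(h \<longlongrightarrow> 0) (at 0)"
    by (rule tendsto_eventually) (auto simp: eventually_at_filter h_def eq)
  ultimately have "h 0 = 0" using tendsto_unique by (metis at_neq_bot)
  then show ?thesis unfolding h_def by simp
qed

lemma morph_into_Q_localI:
  assumes G: "\<forall>y'\<in>Y. q y' \<noteq> 0 \<longrightarrow> G y' = chart n i (a y' / q y', b y', c y')"
    and "q \<in> polyfuns (n + 5)" "a \<in> polyfuns (n + 5)" "b \<in> polyfuns (n + 5)"
    and "c \<in> polyfuns (n + 5)" "q y \<noteq> 0"
  shows "\<exists>i q a b c. q \<in> polyfuns (n + 5) \<and> a \<in> polyfuns (n + 5) \<and> b \<in> polyfuns (n + 5)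
     \<and> c \<in> polyfuns (n + 5) \<and> q y \<noteq> 0
     \<and> (\<forall>y'\<in>Y. q y' \<noteq> 0 \<longrightarrow> G y' = chart n i (a y' / q y', b y' / q y', c y' / q y'))"
proof (rule exI[of _ i], rule exI[of _ q], rule exI[of _ a],
       rule exI[of _ "\<lambda>y. b y * q y"], rule exI[of _ "\<lambda>y. c y * q y"])
  show "q \<in> polyfuns (n + 5) \<and> a \<in> polyfuns (n + 5) \<and> (\<lambda>y. b y * q y) \<in> polyfuns (n + 5)
     \<and> (\<lambda>y. c y * q y) \<in> polyfuns (n + 5) \<and> q y \<noteq> 0
     \<and> (\<forall>y'\<in>Y. q y' \<noteq> 0 \<longrightarrow> G y' = chart n i (a y' / q y', b y' * q y' / q y', c y' * q y' / q y'))"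
    using assms by (simp add: polyfuns.mult)
qed

lemma psi_inv_eqI:
  assumes n: "n \<ge> 1" and y: "y \<in> Phat n - {\<lambda>_. 0}" and e: "psi_rep n i p = y"
  shows "psi_inv n y = chart n i p"
proof -
  have "psi n (chart n i p) \<noteq> (\<lambda>_. 0)" using y e by (simp add: psi_chart)
  then have "chart n i p \<notin> Ccurve n" using psi_on_Ccurve[OF n] by blast
  then show ?thesis using psi_inv_psi[OF n, of "chart n i p"] chart_in_Qpts e
    by (simp add: psi_chart)
qed

lemma psi_inv_morphism:
  assumes n: "n \<ge> 1"
  shows "morph_into_Q n (Phat n - {\<lambda>_. 0}) (psi_inv n)"
  unfolding morph_into_Q_def
proof
  have X0: "(\<lambda>y. y 0) \<in> polyfuns (n + 5)" and X1: "(\<lambda>y. y 1) \<in> polyfuns (n + 5)"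
    and Y0: "(\<lambda>y. y 2) \<in> polyfuns (n + 5)" and Y1: "(\<lambda>y. y 3) \<in> polyfuns (n + 5)"
    and Z: "(\<lambda>y. y (n + 4)) \<in> polyfuns (n + 5)"
    by (simp_all add: polyfuns.var)
  have Yn_minus: "(\<lambda>y. y (n + 3) - y 1 ^ n) \<in> polyfuns (n + 5)"
    by (intro polyfuns_diff polyfuns_power X1) (simp add: polyfuns.var)
  have on_X1: "\<forall>y'\<in>Phat n - {\<lambda>_. 0}. y' 1 \<noteq> 0 \<longrightarrow>
      psi_inv n y' = chart n False (y' 0 / y' 1, y' (n + 4), y' 1)"
    using psi_inv_eqI[OF n] psi_rep_section_X1 by blast
  have on_X0: "\<forall>y'\<in>Phat n - {\<lambda>_. 0}. y' 0 \<noteq> 0 \<longrightarrow>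
      psi_inv n y' = chart n True (y' 1 / y' 0, y' 2, y' 0)"
    using psi_inv_eqI[OF n] psi_rep_section_X0 by blast
  have on_Z: "\<forall>y'\<in>Phat n - {\<lambda>_. 0}. y' (n + 4) \<noteq> 0 \<longrightarrow>
      psi_inv n y' = chart n False ((y' (n + 3) - y' 1 ^ n) / y' (n + 4), y' (n + 4), y' 1)"
    using psi_inv_eqI[OF n] psi_rep_section_Z by blast
  have on_Y0: "\<forall>y'\<in>Phat n - {\<lambda>_. 0}. y' 2 \<noteq> 0 \<longrightarrow>
      psi_inv n y' = chart n True (y' 3 / y' 2, y' 2, y' 0)"
    using psi_inv_eqI[OF n] psi_rep_section_Y0 by blast
  fix y assume y: "y \<in> Phat n - {\<lambda>_. 0}"
  consider "y 1 \<noteq> 0" | "y 0 \<noteq> 0" | "y (n + 4) \<noteq> 0" | "y 2 \<noteq> 0"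
    using Phat_nonzero_cover[OF _ n, of y] y by auto
  then show "\<exists>i q a b c. q \<in> polyfuns (n + 5) \<and> a \<in> polyfuns (n + 5) \<and> b \<in> polyfuns (n + 5)
     \<and> c \<in> polyfuns (n + 5) \<and> q y \<noteq> 0
     \<and> (\<forall>y'\<in>Phat n - {\<lambda>_. 0}. q y' \<noteq> 0 \<longrightarrow>
           psi_inv n y' = chart n i (a y' / q y', b y' / q y', c y' / q y'))"
  proof cases
    case 1
    show ?thesis by (rule morph_into_Q_localI[OF on_X1]) (use X0 X1 Z 1 in simp_all)
  next
    case 2
    show ?thesis by (rule morph_into_Q_localI[OF on_X0]) (use X0 X1 Y0 2 in simp_all)
  next
    case 3
    show ?thesis by (rule morph_into_Q_localI[OF on_Z]) (use X1 Z Yn_minus 3 in simp_all)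
  next
    case 4
    show ?thesis by (rule morph_into_Q_localI[OF on_Y0]) (use X0 Y0 Y1 4 in simp_all)
  qed
qed

lemma regQ_pullback:
  assumes "P \<in> polyfuns (n + 5)" and "\<forall>x\<in>Qpts n. F x = P (psi n x)"
  shows "regQ n F"
  unfolding regQ_def
proof
  fix i
  have "(\<lambda>x. F (chart n i (x 0, x 1, x 2))) = (\<lambda>x. P (psi_rep n i (x 0, x 1, x 2)))"
    using assms(2) chart_in_Qpts psi_chart by (intro ext) simp
  also have "\<dots> \<in> polyfuns 3"
    by (rule polyfuns_comp[OF assms(1)]) (rule psi_rep_polyfuns)
  finally show "(\<lambda>x. F (chart n i (x 0, x 1, x 2))) \<in> polyfuns 3" .
qed

section \<open>Laurent polynomials vanishing on the punctured line\<close>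

lemma poly_eq_0_punctured:
  fixes p :: "'a::field_char_0 poly"
  assumes "\<And>x. x \<noteq> 0 \<Longrightarrow> poly p x = 0"
  shows "p = 0"
proof (rule ccontr)
  assume "p \<noteq> 0"
  then have "finite {x. poly p x = 0}" by (rule poly_roots_finite)
  moreover have "UNIV \<subseteq> insert 0 {x. poly p x = 0}" using assms by auto
  ultimately have "finite (UNIV :: 'a set)" by (meson finite_insert finite_subset)
  then show False using infinite_UNIV_char_0 by blast
qed

text \<open>If A(t) + B(1/t) vanishes for all t \<noteq> 0 and A has no constant term, then
  A = 0: the Laurent polynomial A(t) + B(1/t) determines its part of positive
  degree.  (Multiply by t^deg B and compare high coefficients.)\<close>

lemma laurent_positive_part_unique:
  fixes A B :: "'a::field_char_0 poly"
  assumes A0: "coeff A 0 = 0"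
    and vanish: "\<And>x. x \<noteq> 0 \<Longrightarrow> poly A x + poly B (inverse x) = 0"
  shows "A = 0"
proof -
  define N where "N = degree B"
  define R where "R = monom 1 N * A + reflect_poly B"
  have "poly R x = 0" if "x \<noteq> 0" for x
  proof -
    have "poly R x = x ^ N * (poly A x + poly B (inverse x))"
      using that unfolding R_def N_def by (simp add: poly_monom poly_reflect_poly_nz algebra_simps)
    then show ?thesis using vanish[OF that] by simp
  qed
  then have R: "R = 0" by (rule poly_eq_0_punctured)
  have "coeff A k = 0" for k
  proof (cases k)
    case (Suc j)
    have "coeff (reflect_poly B) (N + k) = 0"
      using degree_reflect_poly_le[of B] Suc unfolding N_def by (intro coeff_eq_0) simp
    then have "coeff R (N + k) = coeff A k" unfolding R_def by (simp add: coeff_monom_mult)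
    then show ?thesis using R by simp
  qed (use A0 in simp)
  then show ?thesis by (intro poly_eqI) simp
qed

lemma poly_sum_list_map: "poly (\<Sum>m\<leftarrow>L. f m) x = (\<Sum>m\<leftarrow>L. poly (f m) x)"
  by (induction L) auto

lemma laurent_positive_terms_eq_0:
  fixes L :: "('a::field_char_0 \<times> nat \<times> nat) list"
  assumes "\<And>t. t \<noteq> 0 \<Longrightarrow> (\<Sum>(c,a,b)\<leftarrow>L. c * t ^ a * inverse t ^ b) = 0"
  shows "(\<Sum>(c,a,b)\<leftarrow>L. if b < a then c * t ^ (a - b) else 0) = 0"
proof -
  define A where "A = (\<Sum>(c,a,b)\<leftarrow>L. if b < a then monom c (a - b) else 0)"
  define B where "B = (\<Sum>(c,a,b)\<leftarrow>L. if b < a then 0 else monom c (b - a))"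
  have poly_A: "poly A x = (\<Sum>(c,a,b)\<leftarrow>L. if b < a then c * x ^ (a - b) else 0)" for x
    unfolding A_def poly_sum_list_map
    by (intro arg_cong[where f = sum_list] map_cong) (auto simp: poly_monom)
  have term_split: "(if b < a then c * x ^ (a - b) else 0)
      + (if b < a then 0 else c * inverse x ^ (b - a)) = c * x ^ a * inverse x ^ b"
    if "x \<noteq> 0" for x :: 'a and c a b
  proof (cases "b < a")
    case True
    then have "x ^ a = x ^ (a - b) * x ^ b" by (simp flip: power_add)
    then show ?thesis using True that by (simp add: field_simps)
  next
    case False
    then have "x ^ b = x ^ a * x ^ (b - a)" by (simp flip: power_add)
    then show ?thesis using False that by (simp add: field_simps)
  qed
  have "A = 0"
  proof (rule laurent_positive_part_unique)
    have "(\<Sum>(c,a,b)\<leftarrow>L. if b < a then c * 0 ^ (a - b) else 0) = (\<Sum>m\<leftarrow>L. 0 :: 'a)"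
      by (intro arg_cong[where f = sum_list] map_cong) auto
    then show "coeff A 0 = 0" using poly_A[of 0] by (simp add: poly_0_coeff_0)
    fix x :: 'a assume x: "x \<noteq> 0"
    have "poly A x + poly B (inverse x) = (\<Sum>(c,a,b)\<leftarrow>L. c * x ^ a * inverse x ^ b)"
      unfolding poly_A B_def poly_sum_list_map sum_list_addf[symmetric]
      by (intro arg_cong[where f = sum_list] map_cong)
         (auto simp: poly_monom term_split[OF x, symmetric])
    then show "poly A x + poly B (inverse x) = 0" using assms[OF x] by simp
  qed
  then show ?thesis using poly_A[of t] by simp
qed

text \<open>A term (c, a, b, d) stands for the monomial c t^a u^b v^d; monoms L is the
  polynomial function given by the list L of terms.\<close>

definition monoms ::
    "(complex \<times> nat \<times> nat \<times> nat) list \<Rightarrow> complex \<Rightarrow> complex \<Rightarrow> complex \<Rightarrow> complex"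
  where "monoms L t u v = (\<Sum>(c,a,b,d)\<leftarrow>L. c * t ^ a * u ^ b * v ^ d)"

definition monoms_mult :: "(complex \<times> nat \<times> nat \<times> nat) list
    \<Rightarrow> (complex \<times> nat \<times> nat \<times> nat) list \<Rightarrow> (complex \<times> nat \<times> nat \<times> nat) list"
  where "monoms_mult L1 L2 =
    concat (map (\<lambda>(c,a,b,d). map (\<lambda>(c',a',b',d'). (c * c', a + a', b + b', d + d')) L2) L1)"

lemma monoms_append: "monoms (L1 @ L2) t u v = monoms L1 t u v + monoms L2 t u v"
  by (simp add: monoms_def)

lemma monoms_monoms_mult: "monoms (monoms_mult L1 L2) t u v = monoms L1 t u v * monoms L2 t u v"
proof (induction L1)
  case Nil then show ?case by (simp add: monoms_def monoms_mult_def)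
next
  case (Cons m L1)
  obtain c a b d where m: "m = (c,a,b,d)" by (cases m)
  have "monoms (map (\<lambda>(c',a',b',d'). (c * c', a + a', b + b', d + d')) L2) t u v
      = c * t ^ a * u ^ b * v ^ d * monoms L2 t u v"
    by (induction L2) (auto simp: monoms_def power_add algebra_simps)
  then show ?case using Cons.IH
    by (simp add: m monoms_mult_def monoms_append[symmetric] algebra_simps)
       (simp add: monoms_def algebra_simps)
qed

definition coords3 :: "complex \<Rightarrow> complex \<Rightarrow> complex \<Rightarrow> nat \<Rightarrow> complex" where
  "coords3 t u v = (\<lambda>k. if k = 0 then t else if k = 1 then u else v)"

lemma polyfuns3_monoms:
  assumes "p \<in> polyfuns 3"
  shows "\<exists>L. \<forall>t u v. p (coords3 t u v) = monoms L t u v"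
  using assms
proof induction
  case (const c)
  have "monoms [(c,0,0,0)] t u v = c" for t u v by (simp add: monoms_def)
  then show ?case by metis
next
  case (var i)
  then consider "i = 0" | "i = 1" | "i = 2" by linarith
  then show ?case
  proof cases
    case 1 then show ?thesis by (intro exI[of _ "[(1,1,0,0)]"]) (simp add: monoms_def coords3_def)
  next
    case 2 then show ?thesis by (intro exI[of _ "[(1,0,1,0)]"]) (simp add: monoms_def coords3_def)
  next
    case 3 then show ?thesis by (intro exI[of _ "[(1,0,0,1)]"]) (simp add: monoms_def coords3_def)
  qed
next
  case (add p q)
  then show ?case by (metis monoms_append)
next
  case (mult p q)
  then show ?case by (metis monoms_monoms_mult)
qed

definition in_psi_alg :: "nat \<Rightarrow> (complex \<Rightarrow> complex \<Rightarrow> complex \<Rightarrow> complex) \<Rightarrow> bool" where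
  "in_psi_alg n f \<longleftrightarrow> (\<exists>P\<in>polyfuns (n + 5). \<forall>t u v. f t u v = P (psi_rep n False (t,u,v)))"

lemma in_psi_alg_const: "in_psi_alg n (\<lambda>t u v. c)"
  unfolding in_psi_alg_def using polyfuns.const by fastforce

lemma in_psi_alg_add: "in_psi_alg n f \<Longrightarrow> in_psi_alg n g \<Longrightarrow> in_psi_alg n (\<lambda>t u v. f t u v + g t u v)"
  unfolding in_psi_alg_def using polyfuns.add by fastforce

lemma in_psi_alg_mult: "in_psi_alg n f \<Longrightarrow> in_psi_alg n g \<Longrightarrow> in_psi_alg n (\<lambda>t u v. f t u v * g t u v)"
  unfolding in_psi_alg_def using polyfuns.mult by fastforce

lemma in_psi_alg_diff: "in_psi_alg n f \<Longrightarrow> in_psi_alg n g \<Longrightarrow> in_psi_alg n (\<lambda>t u v. f t u v - g t u v)"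
  unfolding in_psi_alg_def using polyfuns_diff by fastforce

lemma in_psi_alg_power: "in_psi_alg n f \<Longrightarrow> in_psi_alg n (\<lambda>t u v. f t u v ^ j)"
  by (induction j) (simp_all add: in_psi_alg_const in_psi_alg_mult)

lemma in_psi_alg_sum_list:
  "(\<And>m. m \<in> set L \<Longrightarrow> in_psi_alg n (g m)) \<Longrightarrow> in_psi_alg n (\<lambda>t u v. \<Sum>m\<leftarrow>L. g m t u v)"
  by (induction L) (simp_all add: in_psi_alg_const in_psi_alg_add)

lemma in_psi_alg_coord:
  "k < n + 5 \<Longrightarrow> (\<And>t u v. f t u v = psi_rep n False (t,u,v) k) \<Longrightarrow> in_psi_alg n f"
  unfolding in_psi_alg_def using polyfuns.var[of k "n + 5"] by fastforce

lemma in_psi_alg_f0: "in_psi_alg n (\<lambda>t u v. t * v)"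
  by (rule in_psi_alg_coord[of 0]) (simp_all add: psi_rep_Q0)

lemma in_psi_alg_f1: "in_psi_alg n (\<lambda>t u v. v)"
  by (rule in_psi_alg_coord[of 1]) (simp_all add: psi_rep_Q0)

lemma in_psi_alg_h: "in_psi_alg n (\<lambda>t u v. u)"
  by (rule in_psi_alg_coord[of "n + 4"]) (simp_all add: psi_rep_Q0)

lemma in_psi_alg_g:
  assumes k: "k \<le> n + 1"
  shows "in_psi_alg n (\<lambda>t u v. t ^ k * (v ^ n + t * u))"
proof (rule in_psi_alg_coord[of "2 + (n + 1 - k)"])
  fix t u v
  have "n + 1 - (n + 1 - k) = k" using k by simp
  then show "t ^ k * (v ^ n + t * u) = psi_rep n False (t,u,v) (2 + (n + 1 - k))"
    using psi_rep_Q0(3)[of "n + 1 - k" n t u v] by (simp add: algebra_simps)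
qed simp

text \<open>Monomials t^a u^b v^d with a \<le> b lie in the algebra, as t u = g_(n+1) - f_1^n.\<close>

lemma in_psi_alg_monomial_low:
  assumes "a \<le> b"
  shows "in_psi_alg n (\<lambda>t u v. c * t ^ a * u ^ b * v ^ d)"
proof -
  have "in_psi_alg n (\<lambda>t u v. c * ((v ^ n + t * u) - v ^ n) ^ a * u ^ (b - a) * v ^ d)"
    using in_psi_alg_g[of 0 n]
    by (intro in_psi_alg_mult in_psi_alg_const in_psi_alg_power in_psi_alg_diff
        in_psi_alg_h in_psi_alg_f1)
       simp_all
  moreover have "(\<lambda>t u v. c * ((v ^ n + t * u) - v ^ n) ^ a * u ^ (b - a) * v ^ d)
      = (\<lambda>t u v. c * t ^ a * u ^ b * v ^ d)"
  proof (intro ext)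
    fix t u v :: complex
    have "u ^ b = u ^ a * u ^ (b - a)" using assms by (simp flip: power_add)
    then show "c * ((v ^ n + t * u) - v ^ n) ^ a * u ^ (b - a) * v ^ d = c * t ^ a * u ^ b * v ^ d"
      by (simp add: power_mult_distrib)
  qed
  ultimately show ?thesis by simp
qed

text \<open>With w = v^n + t u, the functions t^e w^al v^be lie in the algebra as long as
  e \<le> (n+1) al + be: each factor w may absorb up to n+1 powers of t (g_k = t^k w)
  and each factor v one power of t (f_0 = t v).\<close>

lemma in_psi_alg_tw_power:
  "e \<le> (n + 1) * al \<Longrightarrow> in_psi_alg n (\<lambda>t u v. t ^ e * (v ^ n + t * u) ^ al)"
proof (induction al arbitrary: e)
  case 0 then show ?case using in_psi_alg_const[of n 1] by simp
next
  case (Suc al)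
  define k where "k = min e (n + 1)"
  have k: "k \<le> n + 1" "e - k \<le> (n + 1) * al" using Suc.prems unfolding k_def by auto
  have "in_psi_alg n (\<lambda>t u v. (t ^ k * (v ^ n + t * u)) * (t ^ (e - k) * (v ^ n + t * u) ^ al))"
    using in_psi_alg_mult[OF in_psi_alg_g[OF k(1)] Suc.IH[OF k(2)]] by simp
  moreover have "(\<lambda>t u v :: complex.
        (t ^ k * (v ^ n + t * u)) * (t ^ (e - k) * (v ^ n + t * u) ^ al))
      = (\<lambda>t u v. t ^ e * (v ^ n + t * u) ^ Suc al)"
  proof (intro ext)
    fix t u v :: complex
    have h: "t ^ k * t ^ (e - k) = t ^ e" unfolding k_def by (simp flip: power_add)
    have "(t ^ k * (v ^ n + t * u)) * (t ^ (e - k) * (v ^ n + t * u) ^ al)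
        = (t ^ k * t ^ (e - k)) * ((v ^ n + t * u) * (v ^ n + t * u) ^ al)"
      by (simp only: mult_ac)
    then show "(t ^ k * (v ^ n + t * u)) * (t ^ (e - k) * (v ^ n + t * u) ^ al)
        = t ^ e * (v ^ n + t * u) ^ Suc al"
      by (simp only: h power_Suc)
  qed
  ultimately show ?case by simp
qed

lemma in_psi_alg_tv_power: "e \<le> be \<Longrightarrow> in_psi_alg n (\<lambda>t u v. t ^ e * v ^ be)"
proof -
  assume e: "e \<le> be"
  have "in_psi_alg n (\<lambda>t u v. (t * v) ^ e * v ^ (be - e))"
    by (intro in_psi_alg_mult in_psi_alg_power in_psi_alg_f0 in_psi_alg_f1)
  moreover have "(t * v) ^ e * v ^ (be - e) = t ^ e * v ^ be" for t v :: complex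
    using e by (simp add: power_mult_distrib flip: power_add)
  ultimately show ?thesis by simp
qed

lemma in_psi_alg_twv_power:
  assumes e: "e \<le> (n + 1) * al + be"
  shows "in_psi_alg n (\<lambda>t u v. t ^ e * (v ^ n + t * u) ^ al * v ^ be)"
proof -
  define e1 where "e1 = min e ((n + 1) * al)"
  have "in_psi_alg n (\<lambda>t u v. (t ^ e1 * (v ^ n + t * u) ^ al) * (t ^ (e - e1) * v ^ be))"
    using e by (intro in_psi_alg_mult in_psi_alg_tw_power in_psi_alg_tv_power) (auto simp: e1_def)
  moreover have "(\<lambda>t u v :: complex. (t ^ e1 * (v ^ n + t * u) ^ al) * (t ^ (e - e1) * v ^ be))
      = (\<lambda>t u v. t ^ e * (v ^ n + t * u) ^ al * v ^ be)"
  proof (intro ext)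
    fix t u v :: complex
    have h: "t ^ e1 * t ^ (e - e1) = t ^ e" unfolding e1_def by (simp flip: power_add)
    have "(t ^ e1 * (v ^ n + t * u) ^ al) * (t ^ (e - e1) * v ^ be)
        = (t ^ e1 * t ^ (e - e1)) * (v ^ n + t * u) ^ al * v ^ be"
      by (simp only: mult_ac)
    then show "(t ^ e1 * (v ^ n + t * u) ^ al) * (t ^ (e - e1) * v ^ be)
        = t ^ e * (v ^ n + t * u) ^ al * v ^ be"
      by (simp only: h)
  qed
  ultimately show ?thesis by simp
qed

text \<open>Let p, q be the restrictions to Q_0, Q_1 of a regular
  function, written as lists of monomials.  Substituting u = (w - v^n)/t turns the
  gluing relation p(t,u,v) = q(1/t, t^(n+1) w, t v) into an identity of Laurent
  polynomials in t (for fixed w, v), so the terms of positive t-degree on both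
  sides agree.  For p these are its monomials t^a u^b v^d with b < a; for q they are
  the terms t^e w^al v^be with e \<le> (n+1) al + be.\<close>

lemma positive_parts_agree:
  fixes Lp Lq :: "(complex \<times> nat \<times> nat \<times> nat) list"
  assumes rel: "\<And>t u v. t \<noteq> 0 \<Longrightarrow>
    monoms Lp t u v = monoms Lq (inverse t) (t ^ (n + 1) * v ^ n + t ^ (n + 2) * u) (t * v)"
  shows "(\<Sum>(c,a,b,d)\<leftarrow>Lp. if b < a then c * t ^ a * u ^ b * v ^ d else 0)
       = (\<Sum>(c,k,al,be)\<leftarrow>Lq. if k < (n + 1) * al + be
            then c * t ^ ((n + 1) * al + be - k) * (v ^ n + t * u) ^ al * v ^ be else 0)"
proof -
  define w where "w = v ^ n + t * u"
  define Lp' where "Lp' = map (\<lambda>(c,a,b,d). (c * (w - v ^ n) ^ b * v ^ d, a, b)) Lp"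
  define Lq' where "Lq' = map (\<lambda>(c,k,al,be). (- (c * w ^ al * v ^ be), (n + 1) * al + be, k)) Lq"
  have laurent: "(\<Sum>(c,a,b)\<leftarrow>Lp' @ Lq'. c * s ^ a * inverse s ^ b) = 0" if s: "s \<noteq> 0" for s
  proof -
    have p: "(\<Sum>(c,a,b)\<leftarrow>Lp'. c * s ^ a * inverse s ^ b) = monoms Lp s ((w - v ^ n) / s) v"
      unfolding Lp'_def monoms_def map_map
      by (intro arg_cong[where f = sum_list] map_cong) (auto simp: power_divide field_simps)
    have swap: "(x ^ i) ^ j = (x ^ j) ^ i" for x :: complex and i j
      by (simp flip: power_mult add: mult.commute)
    have q: "(\<Sum>(c,a,b)\<leftarrow>Lq'. c * s ^ a * inverse s ^ b)
        = - monoms Lq (inverse s) (s ^ (n + 1) * w) (s * v)"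
      unfolding Lq'_def monoms_def map_map uminus_sum_list_map
      by (intro arg_cong[where f = sum_list] map_cong)
         (auto simp: power_add power_mult power_mult_distrib swap[of s n] algebra_simps)
    have "s ^ (n + 1) * v ^ n + s ^ (n + 2) * ((w - v ^ n) / s) = s ^ (n + 1) * w"
      using s by (simp add: field_simps)
    then show ?thesis using rel[OF s, of "(w - v ^ n) / s" v] by (simp add: p q)
  qed
  have "(\<Sum>(c,a,b)\<leftarrow>Lp' @ Lq'. if b < a then c * t ^ (a - b) else 0) = 0"
    by (rule laurent_positive_terms_eq_0) (rule laurent)
  moreover have "(\<Sum>(c,a,b)\<leftarrow>Lp'. if b < a then c * t ^ (a - b) else 0)
      = (\<Sum>(c,a,b,d)\<leftarrow>Lp. if b < a then c * t ^ a * u ^ b * v ^ d else 0)"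
    unfolding Lp'_def map_map
  proof (intro arg_cong[where f = sum_list] map_cong refl)
    fix m :: "complex \<times> nat \<times> nat \<times> nat"
    obtain c a b d where m: "m = (c,a,b,d)" by (cases m)
    have "b < a \<Longrightarrow> t ^ a = t ^ b * t ^ (a - b)" by (simp flip: power_add)
    then show "((\<lambda>(c,a,b). if b < a then c * t ^ (a - b) else 0) \<circ>
        (\<lambda>(c,a,b,d). (c * (w - v ^ n) ^ b * v ^ d, a, b))) m
      = (case m of (c,a,b,d) \<Rightarrow> if b < a then c * t ^ a * u ^ b * v ^ d else 0)"
      unfolding m w_def by (simp add: power_mult_distrib algebra_simps)
  qed
  moreover have "(\<Sum>(c,a,b)\<leftarrow>Lq'. if b < a then c * t ^ (a - b) else 0)
      = - (\<Sum>(c,k,al,be)\<leftarrow>Lq. if k < (n + 1) * al + be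
            then c * t ^ ((n + 1) * al + be - k) * w ^ al * v ^ be else 0)"
    unfolding Lq'_def map_map uminus_sum_list_map
    by (intro arg_cong[where f = sum_list] map_cong) (auto simp: algebra_simps)
  ultimately show ?thesis unfolding w_def by simp
qed

text \<open>Hence a function on Q_0 that extends polynomially across the gluing lies in
  the algebra C[f_0, f_1, g_0, ..., g_(n+1), h]: its monomials with b \<ge> a are
  polynomials in t u = g_(n+1) - f_1^n, u and v, and by the previous lemma the
  remaining ones sum to a polynomial in the g_k, f_0 and f_1.\<close>

lemma glued_polyfuns_in_psi_alg:
  assumes p: "p \<in> polyfuns 3" and q: "q \<in> polyfuns 3"
    and rel: "\<And>t u v. t \<noteq> 0 \<Longrightarrow>
      p (coords3 t u v) = q (coords3 (inverse t) (t ^ (n + 1) * v ^ n + t ^ (n + 2) * u) (t * v))"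
  shows "in_psi_alg n (\<lambda>t u v. p (coords3 t u v))"
proof -
  obtain Lp where Lp: "\<And>t u v. p (coords3 t u v) = monoms Lp t u v"
    using polyfuns3_monoms[OF p] by blast
  obtain Lq where Lq: "\<And>t u v. q (coords3 t u v) = monoms Lq t u v"
    using polyfuns3_monoms[OF q] by blast
  have rel_monoms: "\<And>t u v. t \<noteq> 0 \<Longrightarrow>
      monoms Lp t u v = monoms Lq (inverse t) (t ^ (n + 1) * v ^ n + t ^ (n + 2) * u) (t * v)"
    using rel by (simp only: Lp Lq)
  have split: "monoms Lp t u v = (\<Sum>(c,a,b,d)\<leftarrow>Lp. if b < a then 0 else c * t ^ a * u ^ b * v ^ d)
      + (\<Sum>(c,a,b,d)\<leftarrow>Lp. if b < a then c * t ^ a * u ^ b * v ^ d else 0)" for t u v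
    unfolding monoms_def sum_list_addf[symmetric]
    by (intro arg_cong[where f = sum_list] map_cong) auto
  have low: "in_psi_alg n (\<lambda>t u v. \<Sum>(c,a,b,d)\<leftarrow>Lp. if b < a then 0 else c * t ^ a * u ^ b * v ^ d)"
  proof (rule in_psi_alg_sum_list)
    fix m :: "complex \<times> nat \<times> nat \<times> nat"
    obtain c a b d where m: "m = (c,a,b,d)" by (cases m)
    show "in_psi_alg n (\<lambda>t u v. case m of (c,a,b,d) \<Rightarrow>
        if b < a then 0 else c * t ^ a * u ^ b * v ^ d)"
      by (cases "b < a") (simp_all add: m in_psi_alg_const in_psi_alg_monomial_low)
  qed
  have high: "in_psi_alg n (\<lambda>t u v. \<Sum>(c,k,al,be)\<leftarrow>Lq. if k < (n + 1) * al + be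
      then c * t ^ ((n + 1) * al + be - k) * (v ^ n + t * u) ^ al * v ^ be else 0)"
  proof (rule in_psi_alg_sum_list)
    fix m :: "complex \<times> nat \<times> nat \<times> nat"
    obtain c k al be where m: "m = (c,k,al,be)" by (cases m)
    have "in_psi_alg n (\<lambda>t u v. c * (t ^ ((n + 1) * al + be - k) * (v ^ n + t * u) ^ al * v ^ be))"
      by (intro in_psi_alg_mult in_psi_alg_const in_psi_alg_twv_power) simp
    then show "in_psi_alg n (\<lambda>t u v. case m of (c,k,al,be) \<Rightarrow> if k < (n + 1) * al + be
        then c * t ^ ((n + 1) * al + be - k) * (v ^ n + t * u) ^ al * v ^ be else 0)"
      by (cases "k < (n + 1) * al + be") (simp_all add: m in_psi_alg_const mult.assoc)
  qed
  have "p (coords3 t u v) = (\<Sum>(c,a,b,d)\<leftarrow>Lp. if b < a then 0 else c * t ^ a * u ^ b * v ^ d)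
      + (\<Sum>(c,k,al,be)\<leftarrow>Lq. if k < (n + 1) * al + be
          then c * t ^ ((n + 1) * al + be - k) * (v ^ n + t * u) ^ al * v ^ be else 0)" for t u v
    unfolding Lp split using positive_parts_agree[OF rel_monoms, of t u v] by simp
  then show ?thesis using in_psi_alg_add[OF low high] by presburger
qed

text \<open>On Q_0 this is the previous lemma; it propagates
  to the points of Q_1 with s \<noteq> 0 (which lie in Q_0) and, by continuity in s, to
  the axis s = 0.\<close>

lemma regQ_factors_through_psi:
  assumes r: "regQ n F"
  shows "\<exists>P\<in>polyfuns (n + 5). \<forall>x\<in>Qpts n. F x = P (psi n x)"
proof -
  define p where "p = (\<lambda>x::nat \<Rightarrow> complex. F (chart n False (x 0, x 1, x 2)))"
  define q where "q = (\<lambda>x::nat \<Rightarrow> complex. F (chart n True (x 0, x 1, x 2)))"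
  have p: "p \<in> polyfuns 3" and q: "q \<in> polyfuns 3"
    using r unfolding regQ_def p_def q_def by auto
  have rel: "p (coords3 t u v)
      = q (coords3 (inverse t) (t ^ (n + 1) * v ^ n + t ^ (n + 2) * u) (t * v))"
    if t: "t \<noteq> 0" for t u v
  proof -
    have "chart n False (t,u,v) = chart n True (glue n (t,u,v))"
      using t by (intro chart_eqI) (simp add: Qrel_def)
    then show ?thesis unfolding p_def q_def by (simp add: coords3_def glue_def)
  qed
  obtain P where P: "P \<in> polyfuns (n + 5)"
    and PQ0: "\<And>t u v. p (coords3 t u v) = P (psi_rep n False (t,u,v))"
    using glued_polyfuns_in_psi_alg[OF p q rel] unfolding in_psi_alg_def by blast
  have on_Q0: "F (chart n False (t,u,v)) = P (psi n (chart n False (t,u,v)))" for t u v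
    using PQ0[of t u v] by (simp add: p_def coords3_def psi_chart)
  have on_Q1: "F (chart n True (s,a,b)) = P (psi_rep n True (s,a,b))" if s: "s \<noteq> 0" for s a b
    using on_Q0 chart_Q1_eq_Q0[OF s, of n a b] by (metis psi_chart)
  have on_axis: "F (chart n True (0,a,b)) = P (psi_rep n True (0,a,b))" for a b
  proof -
    have "q ((coords3 0 a b)(0 := 0))
        = (\<lambda>x. P (psi_rep n True (x 0, x 1, x 2))) ((coords3 0 a b)(0 := 0))"
      by (rule polyfuns_eq_off_hyperplane[OF q polyfuns_comp[OF P psi_rep_polyfuns]])
         (simp add: q_def coords3_def on_Q1)
    then show ?thesis by (simp add: q_def coords3_def)
  qed
  have "F x = P (psi n x)" if x: "x \<in> Qpts n" for x
  proof -
    obtain i t u v where x_chart: "x = chart n i (t,u,v)" using Qpts_obtain_chart[OF x] .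
    show ?thesis unfolding x_chart
      using on_Q0 on_Q1 on_axis by (cases i; cases "t = 0") (auto simp: psi_chart)
  qed
  then show ?thesis using P by blast
qed

text \<open>Clause 7: psi^* is injective, since psi(Q) is all of P-hat.\<close>

lemma psi_surj:
  assumes n: "n \<ge> 1" and y: "y \<in> Phat n"
  shows "\<exists>x\<in>Qpts n. psi n x = y"
proof (cases "y = (\<lambda>_. 0)")
  case True
  then show ?thesis using psi_rep_on_C[OF n] chart_in_Qpts by (metis psi_chart)
next
  case False
  then show ?thesis using psi_psi_inv[OF n y] psi_inv_in_Qpts by blast
qed

theorem mainTheorem17:
  fixes n :: nat
  assumes "n \<ge> 1"
  shows
    \<comment> \<open>the f_i, g_i, h are well defined on Q (compatible with the gluing)\<close>
    "(\<forall>a b. (a, b) \<in> Qrel n \<longrightarrow> psi_rep n (fst a) (snd a) = psi_rep n (fst b) (snd b))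
     \<comment> \<open>psi maps Q into P-hat\<close>
     \<and> (\<forall>x\<in>Qpts n. psi n x \<in> Phat n)
     \<comment> \<open>psi contracts C to 0\<close>
     \<and> (\<forall>x\<in>Ccurve n. psi n x = (\<lambda>_. 0))
     \<comment> \<open>psi : Q - C -> P-hat - {0} is an isomorphism\<close>
     \<and> bij_betw (psi n) (Qpts n - Ccurve n) (Phat n - {\<lambda>_. 0})
     \<and> (\<exists>G. (\<forall>y\<in>Phat n - {\<lambda>_. 0}. G y \<in> Qpts n - Ccurve n \<and> psi n (G y) = y)
          \<and> (\<forall>x\<in>Qpts n - Ccurve n. G (psi n x) = x)
          \<and> morph_into_Q n (Phat n - {\<lambda>_. 0}) G)
     \<comment> \<open>O(Q) = C[f_0, f_1, g_0, ..., g_(n+1), h]\<close>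
     \<and> (\<forall>F. regQ n F \<longleftrightarrow> (\<exists>P\<in>polyfuns (n + 5). \<forall>x\<in>Qpts n. F x = P (psi n x)))
     \<comment> \<open>psi^* : O(P-hat) -> O(Q) is injective (surjectivity is the previous clause)\<close>
     \<and> (\<forall>P\<in>polyfuns (n + 5). (\<forall>x\<in>Qpts n. P (psi n x) = 0) \<longrightarrow> (\<forall>y\<in>Phat n. P y = 0))"
proof -
  have n: "n \<ge> 1" by fact
  show ?thesis
  proof (intro conjI)
    show "\<forall>a b. (a, b) \<in> Qrel n \<longrightarrow> psi_rep n (fst a) (snd a) = psi_rep n (fst b) (snd b)"
      using psi_rep_respects_Qrel by blast
    show "\<forall>x\<in>Qpts n. psi n x \<in> Phat n" using psi_in_Phat by blast
    show "\<forall>x\<in>Ccurve n. psi n x = (\<lambda>_. 0)" using psi_on_Ccurve[OF n] by blast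
    show "bij_betw (psi n) (Qpts n - Ccurve n) (Phat n - {\<lambda>_. 0})" by (rule bij_psi[OF n])
    show "\<exists>G. (\<forall>y\<in>Phat n - {\<lambda>_. 0}. G y \<in> Qpts n - Ccurve n \<and> psi n (G y) = y)
          \<and> (\<forall>x\<in>Qpts n - Ccurve n. G (psi n x) = x)
          \<and> morph_into_Q n (Phat n - {\<lambda>_. 0}) G"
      using psi_inv_maps_to[OF n] psi_psi_inv[OF n] psi_inv_psi[OF n] psi_inv_morphism[OF n]
      by (intro exI[of _ "psi_inv n"]) blast
    show "\<forall>F. regQ n F \<longleftrightarrow> (\<exists>P\<in>polyfuns (n + 5). \<forall>x\<in>Qpts n. F x = P (psi n x))"
      using regQ_pullback regQ_factors_through_psi by blast
    show "\<forall>P\<in>polyfuns (n + 5). (\<forall>x\<in>Qpts n. P (psi n x) = 0) \<longrightarrow> (\<forall>y\<in>Phat n. P y = 0)"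
      using psi_surj[OF n] by metis
  qed
qed

end
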